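(* Let $q\ge 1$ and $t\ge 0$ be integers. A code $\mathcal{C}\subseteq\mathcal{S}_{\mathrm{all}}^q$ is a $t$-tail-deletion-detecting code if and only if it is a $t$-tail-insertion-detecting code. Moreover, for every integer $q\ge 3$ and every integer $t\ge 1$ there exists a code $\mathcal{C}\subseteq\mathcal{S}_{\mathrm{all}}^q$ that is a $t$-tail-deletion-detecting code but is not a $2$-tail-indel-detecting code.
   Context: Let $[q]=\{0,1,\dots,q-1\}$. For $1\le m\le q$, a partial permutation of length $m$ over $[q]$ is a sequence $\pi=(\pi_1,\dots,\pi_m)$ of $m$ pairwise distinct elements of $[q]$; write $|\pi|=m$. Let $\mathcal{S}_m^q$ be the set of all partial permutations of length $m$ and $\mathcal{S}_{\mathrm{all}}^q=\bigcup_{m=1}^{q}\mathcal{S}_m^q$. A code is any subset of $\mathcal{S}_{\mathrm{all}}^q$. Juxtaposition $\omega\pi$ denotes concatenation with $\omega$ on the left. Tail deletions: for $\pi$ of length $m$ and an integer $j\ge 0$, let $\pi_{\downarrow j}=(\pi_{k+1},\dots,\pi_m)$ with $k=\min(j,m-1)$ (leftmost symbols are deleted; the last symbol is never deleted). For an integer $t\ge 0$, $\mathcal{B}_{\mathrm{del}}^t(\pi)=\{\pi_{\downarrow j}:0\le j\le t\}$. Tail insertions: $\mathcal{B}_{\mathrm{ins}}^t(\pi)$ is the set of all $\omega\pi\in\mathcal{S}_{\mathrm{all}}^q$ where $\omega$ is a (possibly empty) sequence of at most $t$ elements of $[q]$ (so all entries of $\omega\pi$ are pairwise distinct). Tail indels: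 $\mathcal{B}_{\mathrm{indel}}^t(\pi)$ is the set of all partial permutations obtainable from $\pi$ by a sequence of at most $t$ operations, each being either a single tail deletion (removing the first symbol of a partial permutation of length at least $2$) or a single tail insertion (prepending an element of $[q]$ not already occurring). For $X\in\{\mathrm{del},\mathrm{ins},\mathrm{indel}\}$, a code $\mathcal{C}$ is $t$-tail-$X$-detecting (i.e. $t$-tail-deletion-, insertion-, indel-detecting) if $\mathcal{C}\cap\mathcal{B}_X^t(\pi)=\{\pi\}$ for every $\pi\in\mathcal{C}$. *)

theory Defs
  imports Main
begin

text \<open>Partial permutations over [q] = {0..<q} are represented as lists of naturals:
  nonempty, distinct, all entries below q (length \<le> q follows).
  The first list element is the leftmost symbol \<pi>_1.\<close>

definition ppall :: "nat \<Rightarrow> nat list set" where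
  "ppall q = {xs. xs \<noteq> [] \<and> distinct xs \<and> set xs \<subseteq> {..<q}}"

definition tail_del :: "nat \<Rightarrow> nat list \<Rightarrow> nat list" where
  "tail_del j xs = drop (min j (length xs - 1)) xs"

definition ball_del :: "nat \<Rightarrow> nat list \<Rightarrow> nat list set" where
  "ball_del t xs = {tail_del j xs | j. j \<le> t}"

definition ball_ins :: "nat \<Rightarrow> nat \<Rightarrow> nat list \<Rightarrow> nat list set" where
  "ball_ins q t xs = {w @ xs | w. length w \<le> t \<and> set w \<subseteq> {..<q} \<and> w @ xs \<in> ppall q}"

definition indel_step :: "nat \<Rightarrow> nat list \<Rightarrow> nat list \<Rightarrow> bool" where
  "indel_step q xs ys \<longleftrightarrow>
     (length xs \<ge> 2 \<and> ys = tl xs) \<or> (\<exists>a. a < q \<and> a \<notin> set xs \<and> ys = a # xs)"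

definition ball_indel :: "nat \<Rightarrow> nat \<Rightarrow> nat list \<Rightarrow> nat list set" where
  "ball_indel q t xs = {ys. \<exists>k\<le>t. (indel_step q ^^ k) xs ys}"

definition del_detecting :: "nat \<Rightarrow> nat list set \<Rightarrow> bool" where
  "del_detecting t C \<longleftrightarrow> (\<forall>p\<in>C. C \<inter> ball_del t p = {p})"

definition ins_detecting :: "nat \<Rightarrow> nat \<Rightarrow> nat list set \<Rightarrow> bool" where
  "ins_detecting q t C \<longleftrightarrow> (\<forall>p\<in>C. C \<inter> ball_ins q t p = {p})"

definition indel_detecting :: "nat \<Rightarrow> nat \<Rightarrow> nat list set \<Rightarrow> bool" where
  "indel_detecting q t C \<longleftrightarrow> (\<forall>p\<in>C. C \<inter> ball_indel q t p = {p})"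

end

theory Submission
  imports Defs
begin

text \<open>Both kinds of detection say the same thing: no codeword arises from another one by
  prepending between 1 and t symbols. A deletion ball looks at this relation from the longer
  word, an insertion ball from the shorter one. Indels are stronger, since deleting the first
  symbol and then prepending a new one replaces the first symbol, which never changes the
  length; so the code {[0,1],[2,1]} of equal-length words is deletion-detecting for every t
  but not 2-indel-detecting.\<close>

definition tail_extension :: "nat \<Rightarrow> nat list \<Rightarrow> nat list \<Rightarrow> bool" where
  "tail_extension t xs ys \<longleftrightarrow> (\<exists>w. w \<noteq> [] \<and> length w \<le> t \<and> ys = w @ xs)"

lemma tail_del_eq_append:
  assumes "xs \<noteq> []"
  shows "tail_del (length w) (w @ xs) = xs"
  using assms by (cases xs) (auto simp: tail_del_def min_def)

lemma tail_del_split: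
  obtains w where "length w \<le> j" "xs = w @ tail_del j xs"
  using that[of "take (min j (length xs - 1)) xs"] by (simp add: tail_del_def)

lemma del_detecting_iff_no_tail_extension:
  assumes "[] \<notin> C"
  shows "del_detecting t C \<longleftrightarrow> (\<forall>xs\<in>C. \<forall>ys\<in>C. \<not> tail_extension t xs ys)"
proof
  assume det: "del_detecting t C"
  show "\<forall>xs\<in>C. \<forall>ys\<in>C. \<not> tail_extension t xs ys"
  proof (intro ballI notI)
    fix xs ys assume xs: "xs \<in> C" and ys: "ys \<in> C" and "tail_extension t xs ys"
    then obtain w where w: "w \<noteq> []" "length w \<le> t" "ys = w @ xs"
      by (auto simp: tail_extension_def)
    have "tail_del (length w) ys = xs"
      using w(3) tail_del_eq_append[of xs w] xs assms by auto
    then have "xs \<in> C \<inter> ball_del t ys"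
      using xs w(2) unfolding ball_del_def by force
    then have "xs = ys" using det ys by (auto simp: del_detecting_def)
    with w show False by simp
  qed
next
  assume no_ext: "\<forall>xs\<in>C. \<forall>ys\<in>C. \<not> tail_extension t xs ys"
  show "del_detecting t C" unfolding del_detecting_def
  proof (intro ballI equalityI subsetI)
    fix ys zs assume ys: "ys \<in> C" and zs: "zs \<in> C \<inter> ball_del t ys"
    then obtain j where j: "j \<le> t" "zs = tail_del j ys" by (auto simp: ball_del_def)
    obtain w where "length w \<le> j" "ys = w @ zs"
      using tail_del_split[of j ys] j(2) by metis
    with j(1) have "length w \<le> t" by simp
    with \<open>ys = w @ zs\<close> no_ext ys zs have "w = []"
      unfolding tail_extension_def by blast
    with \<open>ys = w @ zs\<close> show "zs \<in> {ys}" by simp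
  next
    fix ys zs assume "ys \<in> C" "zs \<in> {ys}"
    moreover have "tail_del 0 ys = ys" by (simp add: tail_del_def)
    ultimately show "zs \<in> C \<inter> ball_del t ys" by (force simp: ball_del_def)
  qed
qed

lemma ins_detecting_iff_no_tail_extension:
  assumes "C \<subseteq> ppall q"
  shows "ins_detecting q t C \<longleftrightarrow> (\<forall>xs\<in>C. \<forall>ys\<in>C. \<not> tail_extension t xs ys)"
proof
  assume det: "ins_detecting q t C"
  show "\<forall>xs\<in>C. \<forall>ys\<in>C. \<not> tail_extension t xs ys"
  proof (intro ballI notI)
    fix xs ys assume xs: "xs \<in> C" and ys: "ys \<in> C" and "tail_extension t xs ys"
    then obtain w where w: "w \<noteq> []" "length w \<le> t" "ys = w @ xs"
      by (auto simp: tail_extension_def)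
    have "ys \<in> ppall q" using ys assms by auto
    with w have "ys \<in> C \<inter> ball_ins q t xs"
      using ys by (auto simp: ball_ins_def ppall_def)
    then have "ys = xs" using det xs by (auto simp: ins_detecting_def)
    with w show False by simp
  qed
next
  assume no_ext: "\<forall>xs\<in>C. \<forall>ys\<in>C. \<not> tail_extension t xs ys"
  show "ins_detecting q t C" unfolding ins_detecting_def
  proof (intro ballI equalityI subsetI)
    fix xs ys assume xs: "xs \<in> C" and ys: "ys \<in> C \<inter> ball_ins q t xs"
    then obtain w where w: "length w \<le> t" "ys = w @ xs" by (auto simp: ball_ins_def)
    with no_ext xs ys have "w = []" by (auto simp: tail_extension_def)
    with w show "ys \<in> {xs}" by simp
  next
    fix xs ys assume "xs \<in> C" "ys \<in> {xs}"
    moreover have "[] @ xs \<in> ball_ins q t xs" if "xs \<in> ppall q"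
      using that unfolding ball_ins_def by force
    ultimately show "ys \<in> C \<inter> ball_ins q t xs" using assms by auto
  qed
qed

lemma del_detecting_iff_ins_detecting:
  assumes "C \<subseteq> ppall q"
  shows "del_detecting t C \<longleftrightarrow> ins_detecting q t C"
proof -
  have "[] \<notin> C" using assms by (auto simp: ppall_def)
  then show ?thesis
    using del_detecting_iff_no_tail_extension ins_detecting_iff_no_tail_extension[OF assms]
    by simp
qed

lemma del_detecting_if_equal_lengths:
  assumes "\<And>xs. xs \<in> C \<Longrightarrow> length xs = n" and "[] \<notin> C"
  shows "del_detecting t C"
  unfolding del_detecting_iff_no_tail_extension[OF assms(2)]
proof (intro ballI notI)
  fix xs ys assume "xs \<in> C" "ys \<in> C" "tail_extension t xs ys"
  then obtain w where "w \<noteq> []" "ys = w @ xs"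
    by (auto simp: tail_extension_def)
  then have "length ys > length xs" by simp
  with assms(1) \<open>xs \<in> C\<close> \<open>ys \<in> C\<close> show False by simp
qed

lemma replace_head_in_ball_indel:
  assumes "xs \<noteq> []" "c < q" "c \<notin> set xs"
  shows "c # xs \<in> ball_indel q 2 (a # xs)"
proof -
  have "indel_step q (a # xs) xs" "indel_step q xs (c # xs)"
    using assms by (auto simp: indel_step_def Suc_le_eq)
  then have "(indel_step q ^^ 2) (a # xs) (c # xs)"
    by (auto simp: numeral_2_eq_2 relcompp.simps)
  then show ?thesis by (auto simp: ball_indel_def)
qed

lemma not_indel_detecting_if_heads_differ:
  assumes "a # xs \<in> C" "c # xs \<in> C" "a \<noteq> c" "xs \<noteq> []" "c < q" "c \<notin> set xs"
  shows "\<not> indel_detecting q 2 C"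
proof
  assume "indel_detecting q 2 C"
  then have "C \<inter> ball_indel q 2 (a # xs) = {a # xs}"
    using assms(1) unfolding indel_detecting_def by (rule bspec)
  moreover have "c # xs \<in> C \<inter> ball_indel q 2 (a # xs)"
    using assms(2,4-6) replace_head_in_ball_indel[of xs c q a] by simp
  ultimately show False using assms(3) by simp
qed

theorem mainTheorem1:
  shows "(\<forall>q t C. q \<ge> 1 \<longrightarrow> C \<subseteq> ppall q \<longrightarrow>
            (del_detecting t C \<longleftrightarrow> ins_detecting q t C))
       \<and> (\<forall>q t. q \<ge> 3 \<longrightarrow> t \<ge> 1 \<longrightarrow>
            (\<exists>C. C \<subseteq> ppall q \<and> del_detecting t C \<and> \<not> indel_detecting q 2 C))"
proof (intro conjI allI impI)
  fix q t and C :: "nat list set"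
  assume "C \<subseteq> ppall q"
  then show "del_detecting t C \<longleftrightarrow> ins_detecting q t C"
    by (rule del_detecting_iff_ins_detecting)
next
  fix q t :: nat assume "q \<ge> 3"
  let ?C = "{[0, 1], [2, 1]}"
  have "?C \<subseteq> ppall q" using \<open>q \<ge> 3\<close> by (auto simp: ppall_def)
  moreover have "del_detecting t ?C"
    by (rule del_detecting_if_equal_lengths[where n = 2]) (auto simp: eval_nat_numeral)
  moreover have "\<not> indel_detecting q 2 ?C"
    by (rule not_indel_detecting_if_heads_differ[where a = 0 and c = 2 and xs = "[1]"])
      (use \<open>q \<ge> 3\<close> in simp_all)
  ultimately show "\<exists>C. C \<subseteq> ppall q \<and> del_detecting t C \<and> \<not> indel_detecting q 2 C"
    by (intro exI[of _ ?C]) simp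
qed

end
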